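(* Let $\gamma>0$, $\Gamma_\infty>0$, $R\in\mathbb{N}$, and for $i\in\mathcal{N}=\{1,\dots,N\}$ let $d_i\in\mathbb{N}$, $\delta_i>0$, $\tau^i_{\max}>0$ satisfy \[ \delta_i+\frac{d_i}{R}<\frac{\gamma}{2\Gamma_\infty}\qquad\text{for all } i\in\mathcal{N}. \] Set $\xi_i:=2\Gamma_\infty d_i/R$, $\eta_i:=\gamma-2\Gamma_\infty\delta_i$ and \[ \tilde\omega:=\min_{i\in\mathcal{N}}\left(\eta_i-\frac{W(\xi_i\tau^i_{\max}e^{\eta_i\tau^i_{\max}})}{\tau^i_{\max}}\right),\qquad \kappa(\omega):=\max_{i\in\mathcal{N}}\left(\delta_i+\frac{d_ie^{\omega\tau^i_{\max}}}{R}\right). \] Then $\tilde\omega>0$, and for $\omega\in\mathbb{R}$, the condition $0<\omega\le\gamma-2\Gamma_\infty\kappa(\omega)$ holds if and only if $0<\omega\le\tilde\omega$.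
   Context: $W$ denotes the Lambert $W$-function on $[0,\infty)$: $W(y)$ is the unique solution $x\ge0$ of $xe^x=y$. (In the paper, $d_i$ are node degrees of a connected graph, $\gamma\le\lambda_2(L)$ and $\Gamma_\infty=\sup_{t\ge0}\|e^{\gamma t}(e^{-Lt}-\mathbf{1}\bar{\mathbf{1}})\|_\infty$, but the statement only uses positivity of these quantities.) *)

theory Defs
  imports Complex_Main
begin

definition LambertW :: "real \<Rightarrow> real" where
  "LambertW y = (THE x. x \<ge> 0 \<and> x * exp x = y)"

end

theory Submission
  imports Defs
begin

text \<open>
  For each node, \<open>\<omega> + \<xi>\<^sub>i e\<^bsup>\<omega>\<tau>\<^esup>\<close> is strictly increasing in \<open>\<omega>\<close>, and substituting
  \<open>\<omega> = \<eta>\<^sub>i - W(\<xi>\<^sub>i\<tau> e\<^bsup>\<eta>\<^sub>i\<tau>\<^esup>)/\<tau>\<close> turns the equation \<open>\<omega> + \<xi>\<^sub>i e\<^bsup>\<omega>\<tau>\<^esup> = \<eta>\<^sub>i\<close> into the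
  defining equation of \<open>W\<close>. Hence the node's constraint holds exactly below this
  threshold, which is positive because \<open>\<xi>\<^sub>i < \<eta>\<^sub>i\<close>. The condition on \<open>\<kappa>(\<omega>)\<close> is the
  conjunction of the node constraints, so it holds exactly below the least threshold.
\<close>

lemma mult_exp_strict_mono:
  fixes x y :: real
  assumes "0 \<le> x" "x < y"
  shows "x * exp x < y * exp y"
proof -
  have "x * exp x \<le> x * exp y" using assms by (intro mult_left_mono) auto
  also have "\<dots> < y * exp y" using assms by (intro mult_strict_right_mono) auto
  finally show ?thesis .
qed

lemma ex1_mult_exp_eq:
  fixes y :: real
  assumes "0 \<le> y"
  shows "\<exists>!x. 0 \<le> x \<and> x * exp x = y"
proof -
  have "\<exists>x\<ge>0. x \<le> y \<and> x * exp x = y"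
  proof (rule IVT)
    show "0 * exp 0 \<le> y" using assms by simp
    show "y \<le> y * exp y" using assms by (simp add: mult_le_cancel_left1)
    show "0 \<le> y" by fact
    show "\<forall>x. 0 \<le> x \<and> x \<le> y \<longrightarrow> isCont (\<lambda>x. x * exp x) x"
      by (auto intro!: continuous_intros)
  qed
  moreover have "x = z" if "0 \<le> x" "x * exp x = y" "0 \<le> z" "z * exp z = y" for x z
    using mult_exp_strict_mono[of x z] mult_exp_strict_mono[of z x] that
    by (cases x z rule: linorder_cases) auto
  ultimately show ?thesis by blast
qed

lemma LambertW_mult_exp:
  assumes "0 \<le> y"
  shows "LambertW y * exp (LambertW y) = y"
  using theI'[OF ex1_mult_exp_eq[OF assms]] unfolding LambertW_def by auto

definition LambertW_threshold :: "real \<Rightarrow> real \<Rightarrow> real \<Rightarrow> real" where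
  "LambertW_threshold \<xi> \<eta> \<tau> = \<eta> - LambertW (\<xi> * \<tau> * exp (\<eta> * \<tau>)) / \<tau>"

lemma LambertW_threshold_solves:
  assumes "0 \<le> \<xi>" "0 < \<tau>"
  shows "LambertW_threshold \<xi> \<eta> \<tau> + \<xi> * exp (LambertW_threshold \<xi> \<eta> \<tau> * \<tau>) = \<eta>"
proof -
  define x where "x = LambertW (\<xi> * \<tau> * exp (\<eta> * \<tau>))"
  have x: "x * exp x = \<xi> * \<tau> * exp (\<eta> * \<tau>)"
    unfolding x_def using assms by (intro LambertW_mult_exp) simp
  have "LambertW_threshold \<xi> \<eta> \<tau> * \<tau> = \<eta> * \<tau> - x"
    using assms(2) unfolding LambertW_threshold_def x_def by (simp add: field_simps)
  then have "\<xi> * exp (LambertW_threshold \<xi> \<eta> \<tau> * \<tau>) = \<xi> * exp (\<eta> * \<tau>) / exp x"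
    by (simp add: exp_diff)
  also have "\<dots> = x / \<tau>" using x assms(2) by (simp add: field_simps)
  finally show ?thesis unfolding LambertW_threshold_def x_def by simp
qed

lemma add_mult_exp_strict_mono:
  fixes \<xi> \<tau> a b :: real
  assumes "0 \<le> \<xi>" "0 < \<tau>" "a < b"
  shows "a + \<xi> * exp (a * \<tau>) < b + \<xi> * exp (b * \<tau>)"
proof -
  have "\<xi> * exp (a * \<tau>) \<le> \<xi> * exp (b * \<tau>)" using assms by (intro mult_left_mono) auto
  then show ?thesis using assms(3) by linarith
qed

lemma add_mult_exp_le_iff_le_LambertW_threshold:
  assumes "0 \<le> \<xi>" "0 < \<tau>"
  shows "\<omega> + \<xi> * exp (\<omega> * \<tau>) \<le> \<eta> \<longleftrightarrow> \<omega> \<le> LambertW_threshold \<xi> \<eta> \<tau>"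
  using LambertW_threshold_solves[OF assms, of \<eta>]
    add_mult_exp_strict_mono[OF assms, of \<omega> "LambertW_threshold \<xi> \<eta> \<tau>"]
    add_mult_exp_strict_mono[OF assms, of "LambertW_threshold \<xi> \<eta> \<tau>" \<omega>]
  by (cases \<omega> "LambertW_threshold \<xi> \<eta> \<tau>" rule: linorder_cases) auto

lemma LambertW_threshold_pos:
  assumes "0 \<le> \<xi>" "0 < \<tau>" "\<xi> < \<eta>"
  shows "0 < LambertW_threshold \<xi> \<eta> \<tau>"
proof -
  have "0 + \<xi> * exp (0 * \<tau>) \<le> \<eta>" using assms(3) by simp
  then have "0 \<le> LambertW_threshold \<xi> \<eta> \<tau>"
    using add_mult_exp_le_iff_le_LambertW_threshold[OF assms(1,2)] by blast
  moreover have "LambertW_threshold \<xi> \<eta> \<tau> \<noteq> 0"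
    using LambertW_threshold_solves[OF assms(1,2), of \<eta>] assms(3) by auto
  ultimately show ?thesis by simp
qed

lemma le_diff_mult_Max_iff:
  fixes f :: "'a \<Rightarrow> real"
  assumes "finite I" "I \<noteq> {}" "0 < c"
  shows "x \<le> g - c * Max (f ` I) \<longleftrightarrow> (\<forall>i\<in>I. x \<le> g - c * f i)"
proof -
  have "x \<le> g - c * Max (f ` I) \<longleftrightarrow> Max (f ` I) \<le> (g - x) / c"
    using assms(3) by (simp add: field_simps)
  also have "\<dots> \<longleftrightarrow> (\<forall>i\<in>I. f i \<le> (g - x) / c)" using assms(1,2) by simp
  also have "\<dots> \<longleftrightarrow> (\<forall>i\<in>I. x \<le> g - c * f i)" using assms(3) by (simp add: field_simps)
  finally show ?thesis .
qed

theorem lemma5: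
  fixes gamma Gamma_inf :: real and R N :: nat
    and d :: "nat \<Rightarrow> nat" and delta tau_max :: "nat \<Rightarrow> real"
  assumes "gamma > 0" and "Gamma_inf > 0" and "R > 0" and "N \<ge> 1"
    and "\<forall>i\<in>{1..N}. delta i > 0"
    and "\<forall>i\<in>{1..N}. tau_max i > 0"
    and "\<forall>i\<in>{1..N}. delta i + real (d i) / real R < gamma / (2 * Gamma_inf)"
  shows "let xi = (\<lambda>i. 2 * Gamma_inf * real (d i) / real R);
             eta = (\<lambda>i. gamma - 2 * Gamma_inf * delta i);
             omega_t = Min ((\<lambda>i. eta i - LambertW (xi i * tau_max i * exp (eta i * tau_max i)) / tau_max i) ` {1..N});
             kappa = (\<lambda>\<omega>::real. Max ((\<lambda>i. delta i + real (d i) * exp (\<omega> * tau_max i) / real R) ` {1..N}))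
         in omega_t > 0 \<and>
            (\<forall>\<omega>::real. (0 < \<omega> \<and> \<omega> \<le> gamma - 2 * Gamma_inf * kappa \<omega>) \<longleftrightarrow> (0 < \<omega> \<and> \<omega> \<le> omega_t))"
proof -
  define xi where "xi = (\<lambda>i. 2 * Gamma_inf * real (d i) / real R)"
  define eta where "eta = (\<lambda>i. gamma - 2 * Gamma_inf * delta i)"
  define w where "w = (\<lambda>i. LambertW_threshold (xi i) (eta i) (tau_max i))"
  have xi_nonneg: "0 \<le> xi i" for i using assms(2) unfolding xi_def by simp
  have xi_less_eta: "xi i < eta i" if "i \<in> {1..N}" for i
    using assms(2) assms(7) that unfolding xi_def eta_def by (auto simp: field_simps)
  have nodes: "finite {1..N}" "{1..N} \<noteq> {}" using assms(4) by auto
  have "0 < Min (w ` {1..N})"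
    using nodes assms(6) xi_nonneg xi_less_eta by (simp add: w_def LambertW_threshold_pos)
  moreover have "\<omega> \<le> gamma - 2 * Gamma_inf *
      Max ((\<lambda>i. delta i + real (d i) * exp (\<omega> * tau_max i) / real R) ` {1..N})
    \<longleftrightarrow> \<omega> \<le> Min (w ` {1..N})" for \<omega>
  proof -
    have node: "\<omega> \<le> gamma - 2 * Gamma_inf * (delta i + real (d i) * exp (\<omega> * tau_max i) / real R)
        \<longleftrightarrow> \<omega> \<le> w i" if "i \<in> {1..N}" for i
      using add_mult_exp_le_iff_le_LambertW_threshold[of "xi i" "tau_max i" \<omega> "eta i"] xi_nonneg
        assms(6) that unfolding w_def xi_def eta_def by (auto simp: algebra_simps)
    show ?thesis
      using nodes assms(2) by (simp add: le_diff_mult_Max_iff node)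
  qed
  ultimately show ?thesis
    unfolding Let_def xi_def[symmetric] eta_def[symmetric] LambertW_threshold_def[symmetric]
      w_def[symmetric] by auto
qed

end
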